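(* Let $k,n\ge1$, let $M=\Gamma(\mathbb Z\,\overrightarrow{\times}\,G,(k,0))$ with $G$ a Dedekind $\sigma$-complete $\ell$-group (a $\mathrm{Rad}$-Dedekind $\sigma$-complete $k$-perfect MV-algebra), let $x$ be an $n$-dimensional observable on $M$ and $F=F_x$. Let $i$ be the least integer in $\{1,\ldots,k\}$ such that $T_i\neq\emptyset$. Then $T_i$ has only finitely many characteristic points.
   Context: $\mathbb Z\,\overrightarrow{\times}\,G$ is $\mathbb Z\times G$ with lexicographic order ($(a,g)\le(b,h)$ iff $a<b$ or ($a=b$ and $g\le h$)); $\Gamma(K,v)=([0,v];\oplus,',0,v)$ with $a\oplus b=(a+b)\wedge v$, $a'=v-a$. Partial addition on $M$: $a+b$ defined iff the group sum is $\le(k,0)$. Summable sequence: every finite subfamily has a sum in $M$; its sum is the supremum of finite partial sums. An $n$-dimensional observable is $x:\mathcal B(\mathbb R^n)\to M$ with $x(\mathbb R^n)=1$ and, for pairwise disjoint Borel $A_m$, $(x(A_m))_m$ summable with $x(\bigcup A_m)=\sum_m x(A_m)$. $F_x(s_1,\ldots,s_n)=x((-\infty,s_1)\times\cdots\times(-\infty,s_n))$. For $j=0,\ldots,k$, $M_j=\{(j,g)\in M\}$ and $T_j=\{\mathbf s\in\mathbb R^n\colon F(\mathbf s)\in M_j\}$. For $i\ge1$ and $\mathbf s=(s_1,\ldots,s_n)\in T_i$, $\pi^i_j(\mathbf s)=\inf\{r\in\mathbb R\colon(s_1,\ldots,s_{j-1},r,s_{j+1},\ldots,s_n)\in T_i\}$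 and $\pi_i(\mathbf s)=(\pi^i_1(\mathbf s),\ldots,\pi^i_n(\mathbf s))$; the characteristic points of $T_i$ are the points $\pi_i(\mathbf s)$, $\mathbf s\in T_i$. *)

theory Defs
  imports "HOL-Analysis.Analysis" "HOL-Library.Lattice_Algebras"
begin

definition dedekind_sigma_complete :: "'g::lattice_ab_group_add itself \<Rightarrow> bool" where
  "dedekind_sigma_complete _ \<longleftrightarrow>
     (\<forall>f::nat \<Rightarrow> 'g. bdd_above (range f) \<longrightarrow>
        (\<exists>s. (\<forall>m. f m \<le> s) \<and> (\<forall>u. (\<forall>m. f m \<le> u) \<longrightarrow> s \<le> u)))"

definition lexle :: "int \<times> 'g::lattice_ab_group_add \<Rightarrow> int \<times> 'g \<Rightarrow> bool" where
  "lexle p q \<longleftrightarrow> fst p < fst q \<or> (fst p = fst q \<and> snd p \<le> snd q)"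

text \<open>Carrier of M = Gamma(Z lex G, (k,0)).\<close>
definition inM :: "int \<Rightarrow> int \<times> 'g::lattice_ab_group_add \<Rightarrow> bool" where
  "inM k p \<longleftrightarrow> lexle (0, 0) p \<and> lexle p (k, 0)"

definition gsum :: "('a \<Rightarrow> int \<times> 'g::lattice_ab_group_add) \<Rightarrow> 'a set \<Rightarrow> int \<times> 'g" where
  "gsum f S = ((\<Sum>m\<in>S. fst (f m)), (\<Sum>m\<in>S. snd (f m)))"

definition lub_M :: "int \<Rightarrow> (int \<times> 'g::lattice_ab_group_add) set \<Rightarrow> int \<times> 'g \<Rightarrow> bool" where
  "lub_M k S s \<longleftrightarrow> inM k s \<and> (\<forall>t\<in>S. lexle t s) \<and>
     (\<forall>u. inM k u \<and> (\<forall>t\<in>S. lexle t u) \<longrightarrow> lexle s u)"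

text \<open>Summable sequence in M: every finite subfamily has a sum in M
 (partial addition defined iff the group sum is at most (k,0)).\<close>
definition summable_M :: "int \<Rightarrow> (nat \<Rightarrow> int \<times> 'g::lattice_ab_group_add) \<Rightarrow> bool" where
  "summable_M k a \<longleftrightarrow> (\<forall>F. finite F \<longrightarrow> inM k (gsum a F))"

text \<open>n-dimensional observable on M (only its values on Borel sets matter).\<close>
definition observable ::
  "int \<Rightarrow> ((real^'n) set \<Rightarrow> int \<times> 'g::lattice_ab_group_add) \<Rightarrow> bool" where
  "observable k x \<longleftrightarrow>
     (\<forall>A\<in>sets (borel :: (real^'n) measure). inM k (x A)) \<and>
     x UNIV = (k, 0) \<and>
     (\<forall>A::nat \<Rightarrow> (real^'n) set. (\<forall>m. A m \<in> sets borel) \<longrightarrow> disjoint_family A \<longrightarrow>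
        summable_M k (\<lambda>m. x (A m)) \<and>
        lub_M k {gsum (\<lambda>m. x (A m)) F | F. finite F} (x (\<Union>m. A m)))"

definition distr_fun :: "((real^'n) set \<Rightarrow> 'b) \<Rightarrow> real^'n \<Rightarrow> 'b" where
  "distr_fun x s = x {y. \<forall>j. y $ j < s $ j}"

text \<open>T_j = {s. F(s) in M_j}.\<close>
definition Tset :: "((real^'n) set \<Rightarrow> int \<times> 'g) \<Rightarrow> int \<Rightarrow> (real^'n) set" where
  "Tset x j = {s. fst (distr_fun x s) = j}"

definition char_proj :: "((real^'n) set \<Rightarrow> int \<times> 'g) \<Rightarrow> int \<Rightarrow> real^'n \<Rightarrow> ereal^'n" where
  "char_proj x i s = (\<chi> j. Inf (ereal ` {r. (\<chi> l. if l = j then r else s $ l) \<in> Tset x i}))"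

definition char_points :: "((real^'n) set \<Rightarrow> int \<times> 'g) \<Rightarrow> int \<Rightarrow> (ereal^'n) set" where
  "char_points x i = char_proj x i ` Tset x i"

end

theory Submission
  imports Defs
begin

(* Only the integer part of the observable matters: A |-> fst (x A) is a finitely additive
   set function with values in {0..k}, so t |-> fst (F t) is monotone.  If s is in T_i and
   a < pi_j(s) < b, then moving the j-th coordinate of s down to a leaves T_i, so fst F drops
   below i, while moving it up to b keeps fst F at least i; hence the slab of the lower orthant
   of s between a and b has integer weight at least 1.  Distinct real values of pi_j give
   pairwise disjoint slabs, so every coordinate of a characteristic point takes at most k real
   values besides the two infinities. *)

lemma lexle_antisym: "lexle p q \<Longrightarrow> lexle q p \<Longrightarrow> p = q"
  unfolding lexle_def by (auto simp: prod_eq_iff)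

lemma lexle_add_nonneg: "lexle (0, 0) q \<Longrightarrow> lexle p (p + q)"
  unfolding lexle_def by auto

lemma lexle_nonneg_sum:
  assumes "\<And>m. m \<in> F \<Longrightarrow> lexle (0, 0) (f m)"
  shows "lexle (0, 0) (sum f F)"
  using assms
proof (induction F rule: infinite_finite_induct)
  case (insert a F)
  then have "lexle (0, 0) (f a)" "lexle (0, 0) (sum f F)" by auto
  then show ?case using insert.hyps unfolding lexle_def by auto
qed (auto simp: lexle_def)

lemma lexle_sum_subset:
  assumes "finite H" "G \<subseteq> H" "\<And>m. m \<in> H \<Longrightarrow> lexle (0, 0) (f m)"
  shows "lexle (sum f G) (sum f H)"
proof -
  have "sum f H = sum f G + sum f (H - G)"
    using assms(1,2) by (simp add: sum.subset_diff add.commute)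
  moreover have "lexle (0, 0) (sum f (H - G))"
    using assms(3) by (intro lexle_nonneg_sum) auto
  ultimately show ?thesis
    by (simp add: lexle_add_nonneg)
qed

lemma gsum_eq_sum: "gsum f F = sum f F"
  by (simp add: gsum_def prod_eq_iff fst_sum snd_sum)

context
  fixes k :: int and x :: "(real^'n::finite) set \<Rightarrow> int \<times> 'g::lattice_ab_group_add"
  assumes obs: "observable k x"
begin

lemma observable_inM: "A \<in> sets borel \<Longrightarrow> inM k (x A)"
  using obs unfolding observable_def by blast

lemma observable_fst_bounds: "A \<in> sets borel \<Longrightarrow> 0 \<le> fst (x A) \<and> fst (x A) \<le> k"
  using observable_inM unfolding inM_def lexle_def by fastforce

lemma observable_disjoint_family:
  assumes "\<And>m. A m \<in> sets borel" "disjoint_family A"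
  shows "summable_M k (\<lambda>m. x (A m))"
    and "lub_M k {sum (\<lambda>m. x (A m)) F | F. finite F} (x (\<Union>m. A m))"
  using obs assms unfolding observable_def gsum_eq_sum by blast+

text \<open>Doubling: the lub property for the constant family of empty sets gives
  \<open>x {} + x {} \<le> x {}\<close> in the lexicographic order.\<close>
lemma observable_empty: "x {} = 0"
proof -
  have lub: "lub_M k {sum (\<lambda>m. x {}) F | F. finite (F :: nat set)} (x {})"
    using observable_disjoint_family(2)[of "\<lambda>_. {}"] by (simp add: disjoint_family_on_def)
  have "sum (\<lambda>m. x {}) {0::nat, 1} \<in> {sum (\<lambda>m. x {}) F | F. finite (F :: nat set)}" by blast
  then have "lexle (sum (\<lambda>m. x {}) {0::nat, 1}) (x {})"
    using lub unfolding lub_M_def by blast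
  then have "lexle (x {} + x {}) (x {})"
    by simp
  moreover have "lexle (0, 0) (x {})"
    using observable_inM[of "{}"] unfolding inM_def by simp
  ultimately show ?thesis
    unfolding lexle_def by (auto simp: prod_eq_iff intro: order.antisym)
qed

lemma observable_finite_union:
  fixes A :: "nat \<Rightarrow> (real^'n) set"
  assumes borel: "\<And>m. A m \<in> sets borel" and disj: "disjoint_family A"
    and empty: "\<And>m. N \<le> m \<Longrightarrow> A m = {}"
  shows "x (\<Union>m. A m) = (\<Sum>m<N. x (A m))"
proof -
  let ?S = "{sum (\<lambda>m. x (A m)) F | F. finite F}"
  let ?t = "\<Sum>m<N. x (A m)"
  have lub: "lub_M k ?S (x (\<Union>m. A m))"
    using observable_disjoint_family(2)[OF borel disj] .
  have nonneg: "lexle (0, 0) (x (A m))" for m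
    using observable_inM[OF borel] unfolding inM_def by blast
  have "?t \<in> ?S" by blast
  then have "lexle ?t (x (\<Union>m. A m))"
    using lub unfolding lub_M_def by blast
  moreover have "lexle (x (\<Union>m. A m)) ?t"
  proof -
    have "inM k ?t"
      using observable_disjoint_family(1)[OF borel disj] unfolding summable_M_def gsum_eq_sum
      by blast
    moreover have "lexle s ?t" if "s \<in> ?S" for s
    proof -
      obtain F where F: "finite F" and s: "s = sum (\<lambda>m. x (A m)) F"
        using \<open>s \<in> ?S\<close> by blast
      have "?t = sum (\<lambda>m. x (A m)) (F \<union> {..<N})"
        using F empty observable_empty by (intro sum.mono_neutral_left) auto
      then show ?thesis
        using s F nonneg by (simp add: lexle_sum_subset)
    qed
    ultimately show ?thesis
      using lub unfolding lub_M_def by blast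
  qed
  ultimately show ?thesis by (blast intro: lexle_antisym)
qed

lemma observable_Un:
  assumes "A \<in> sets borel" "B \<in> sets borel" "A \<inter> B = {}"
  shows "x (A \<union> B) = x A + x B"
proof -
  define C where "C m = (if m = 0 then A else if m = 1 then B else {})" for m :: nat
  have "(\<Union>m. C m) = A \<union> B"
    unfolding C_def by (auto split: if_splits)
  moreover have "disjoint_family C"
    using assms(3) unfolding C_def disjoint_family_on_def by auto
  ultimately have "x (A \<union> B) = (\<Sum>m<2. x (C m))"
    using observable_finite_union[of C 2] assms(1,2) unfolding C_def by auto
  then show ?thesis
    by (simp add: C_def numeral_2_eq_2)
qed

lemma observable_UN:
  assumes "finite I" "disjoint_family_on S I" "\<And>w. w \<in> I \<Longrightarrow> S w \<in> sets borel"
  shows "x (\<Union>w\<in>I. S w) = (\<Sum>w\<in>I. x (S w))"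
  using assms
proof (induction I rule: finite_induct)
  case empty
  then show ?case by (simp add: observable_empty)
next
  case (insert a I)
  then have "x (S a \<union> (\<Union>w\<in>I. S w)) = x (S a) + x (\<Union>w\<in>I. S w)"
    by (intro observable_Un) (auto simp: disjoint_family_on_insert)
  with insert show ?case
    by (simp add: disjoint_family_on_insert)
qed

lemma observable_fst_mono:
  assumes "A \<in> sets borel" "B \<in> sets borel" "A \<subseteq> B"
  shows "fst (x A) \<le> fst (x B)"
proof -
  have "x B = x A + x (B - A)"
    using observable_Un[of A "B - A"] assms by (simp add: Un_absorb1)
  then show ?thesis
    using observable_fst_bounds[of "B - A"] assms by auto
qed

end

definition lower_orthant :: "real^'n \<Rightarrow> (real^'n) set" where
  "lower_orthant s = {y. \<forall>l. y $ l < s $ l}"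

definition coord_upd :: "real^'n \<Rightarrow> 'n \<Rightarrow> real \<Rightarrow> real^'n" where
  "coord_upd s j r = (\<chi> l. if l = j then r else s $ l)"

definition slab :: "real^'n \<Rightarrow> 'n \<Rightarrow> real \<Rightarrow> real \<Rightarrow> (real^'n) set" where
  "slab s j a b = {y. (\<forall>l. l \<noteq> j \<longrightarrow> y $ l < s $ l) \<and> a \<le> y $ j \<and> y $ j < b}"

lemma lower_orthant_borel [measurable]: "lower_orthant s \<in> sets borel"
  unfolding lower_orthant_def by measurable

lemma slab_borel [measurable]: "slab s j a b \<in> sets borel"
  unfolding slab_def by measurable

lemma lower_orthant_mono: "(\<And>l. s $ l \<le> t $ l) \<Longrightarrow> lower_orthant s \<subseteq> lower_orthant t"
  unfolding lower_orthant_def by (auto intro: less_le_trans)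

lemma coord_upd_nth [simp]: "coord_upd s j r $ l = (if l = j then r else s $ l)"
  unfolding coord_upd_def by simp

lemma coord_upd_same [simp]: "coord_upd s j (s $ j) = s"
  by (simp add: vec_eq_iff)

lemma lower_orthant_coord_upd_split:
  assumes "a \<le> b"
  shows "lower_orthant (coord_upd s j b) = lower_orthant (coord_upd s j a) \<union> slab s j a b"
    and "lower_orthant (coord_upd s j a) \<inter> slab s j a b = {}"
  using assms unfolding lower_orthant_def slab_def by (auto 4 3 split: if_splits)

lemma Tset_iff_lower_orthant: "s \<in> Tset x i \<longleftrightarrow> fst (x (lower_orthant s)) = i"
  unfolding Tset_def distr_fun_def lower_orthant_def by simp

lemma char_proj_nth: "char_proj x i s $ j = Inf (ereal ` {r. coord_upd s j r \<in> Tset x i})"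
  unfolding char_proj_def coord_upd_def by simp

lemma char_proj_le: "s \<in> Tset x i \<Longrightarrow> char_proj x i s $ j \<le> ereal (s $ j)"
  unfolding char_proj_nth by (rule Inf_lower) simp

lemma fst_slab_ge_1:
  fixes x :: "(real^'n::finite) set \<Rightarrow> int \<times> 'g::lattice_ab_group_add"
  assumes obs: "observable k x" and s: "s \<in> Tset x i"
    and a: "ereal a < char_proj x i s $ j" and b: "char_proj x i s $ j < ereal b"
  shows "1 \<le> fst (x (slab s j a b))"
proof -
  let ?F = "\<lambda>t. fst (x (lower_orthant t))"
  obtain r where r: "coord_upd s j r \<in> Tset x i" "r < b"
    using b unfolding char_proj_nth Inf_less_iff by auto
  have "i \<le> ?F (coord_upd s j b)"
    using r observable_fst_mono[OF obs] lower_orthant_mono[of "coord_upd s j r" "coord_upd s j b"]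
    unfolding Tset_iff_lower_orthant by fastforce
  moreover have "?F (coord_upd s j a) < i"
  proof -
    have "coord_upd s j a \<notin> Tset x i"
      using a Inf_lower[of "ereal a" "ereal ` {r. coord_upd s j r \<in> Tset x i}"]
      unfolding char_proj_nth by auto
    moreover have "a \<le> s $ j"
      using less_le_trans[OF a char_proj_le[OF s]] by simp
    then have "?F (coord_upd s j a) \<le> ?F s"
      using observable_fst_mono[OF obs] lower_orthant_mono[of "coord_upd s j a" s] by simp
    ultimately show ?thesis
      using s unfolding Tset_iff_lower_orthant by simp
  qed
  moreover have "a \<le> b"
    using less_trans[OF a b] by simp
  then have "?F (coord_upd s j b) = ?F (coord_upd s j a) + fst (x (slab s j a b))"
    using observable_Un[OF obs, of "lower_orthant (coord_upd s j a)" "slab s j a b"]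
      lower_orthant_coord_upd_split[of a b s j] by simp
  ultimately show ?thesis by linarith
qed

lemma finite_real_set_separated:
  fixes W :: "real set"
  assumes "finite W"
  obtains \<delta> where "\<delta> > 0" "\<And>v w. v \<in> W \<Longrightarrow> w \<in> W \<Longrightarrow> v < w \<Longrightarrow> v + \<delta> \<le> w - \<delta>"
proof
  define D where "D = insert 1 ((\<lambda>(v, w). w - v) ` {(v, w) \<in> W \<times> W. v < w})"
  have "finite {(v, w) \<in> W \<times> W. v < w}"
    by (rule finite_subset[of _ "W \<times> W"]) (use assms in auto)
  then have D: "finite D" "\<And>d. d \<in> D \<Longrightarrow> d > 0"
    unfolding D_def by auto
  show "Min D / 2 > 0"
    using D by (simp add: D_def)
  show "v + Min D / 2 \<le> w - Min D / 2" if "v \<in> W" "w \<in> W" "v < w" for v w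
  proof -
    have "w - v \<in> D"
      using that unfolding D_def by force
    then show ?thesis
      using Min_le[OF D(1)] by fastforce
  qed
qed

lemma card_real_char_proj_values_le:
  fixes x :: "(real^'n::finite) set \<Rightarrow> int \<times> 'g::lattice_ab_group_add"
  assumes obs: "observable k x" and "finite W"
    and W: "ereal ` W \<subseteq> (\<lambda>s. char_proj x i s $ j) ` Tset x i"
  shows "int (card W) \<le> k"
proof -
  have "\<forall>w\<in>W. \<exists>s. s \<in> Tset x i \<and> char_proj x i s $ j = ereal w"
    using W by force
  from bchoice[OF this] obtain \<sigma>
    where \<sigma>: "\<And>w. w \<in> W \<Longrightarrow> \<sigma> w \<in> Tset x i \<and> char_proj x i (\<sigma> w) $ j = ereal w"
    by blast
  obtain \<delta> where \<delta>: "\<delta> > 0" "\<And>v w. v \<in> W \<Longrightarrow> w \<in> W \<Longrightarrow> v < w \<Longrightarrow> v + \<delta> \<le> w - \<delta>"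
    using finite_real_set_separated[OF \<open>finite W\<close>] by blast
  define S where "S w = slab (\<sigma> w) j (w - \<delta>) (w + \<delta>)" for w
  have sep: "S v \<inter> S w = {}" if "v \<in> W" "w \<in> W" "v < w" for v w
    using \<delta>(2)[OF that] unfolding S_def slab_def by auto
  have disj: "disjoint_family_on S W"
    unfolding disjoint_family_on_def
  proof (intro ballI impI)
    fix v w assume "v \<in> W" "w \<in> W" "v \<noteq> w"
    then show "S v \<inter> S w = {}"
      using sep[of v w] sep[of w v] by (cases "v < w") auto
  qed
  have "int (card W) = (\<Sum>w\<in>W. 1)"
    by simp
  also have "\<dots> \<le> (\<Sum>w\<in>W. fst (x (S w)))"
    using \<sigma> \<delta>(1) unfolding S_def by (intro sum_mono fst_slab_ge_1[OF obs]) auto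
  also have "\<dots> = fst (x (\<Union>w\<in>W. S w))"
    using observable_UN[OF obs \<open>finite W\<close> disj] by (simp add: S_def fst_sum)
  also have "\<dots> \<le> k"
    using observable_fst_bounds[OF obs] \<open>finite W\<close> unfolding S_def by (simp add: sets.finite_UN)
  finally show ?thesis .
qed

lemma finite_char_proj_values:
  fixes x :: "(real^'n::finite) set \<Rightarrow> int \<times> 'g::lattice_ab_group_add"
  assumes "observable k x"
  shows "finite ((\<lambda>s. char_proj x i s $ j) ` Tset x i)"
proof -
  let ?P = "(\<lambda>s. char_proj x i s $ j) ` Tset x i"
  have "card W \<le> nat k" if "W \<subseteq> {r. ereal r \<in> ?P}" "finite W" for W
  proof -
    have "ereal ` W \<subseteq> ?P"
      using that(1) by auto
    then have "int (card W) \<le> k"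
      using card_real_char_proj_values_le[OF assms \<open>finite W\<close>] by blast
    then show ?thesis by simp
  qed
  then have "finite {r. ereal r \<in> ?P}"
    using finite_if_finite_subsets_card_bdd by blast
  moreover have "?P \<subseteq> insert \<infinity> (insert (-\<infinity>) (ereal ` {r. ereal r \<in> ?P}))"
  proof
    fix p assume "p \<in> ?P"
    then show "p \<in> insert \<infinity> (insert (-\<infinity>) (ereal ` {r. ereal r \<in> ?P}))"
      by (cases p) auto
  qed
  ultimately show ?thesis
    by (meson finite.insertI finite_imageI finite_subset)
qed

lemma finite_componentwise_vectors:
  assumes "\<And>j. finite (B j)"
  shows "finite {v :: 'a^'n::finite. \<forall>j. v $ j \<in> B j}"
proof (rule finite_subset)
  show "{v :: 'a^'n. \<forall>j. v $ j \<in> B j} \<subseteq> vec_lambda ` PiE UNIV B"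
  proof
    fix v :: "'a^'n" assume "v \<in> {v. \<forall>j. v $ j \<in> B j}"
    then have "vec_nth v \<in> PiE UNIV B"
      by (simp add: PiE_iff)
    then show "v \<in> vec_lambda ` PiE UNIV B"
      by (rule image_eqI[rotated]) simp
  qed
  show "finite (vec_lambda ` PiE UNIV B)"
    using assms by (simp add: finite_PiE)
qed

lemma finite_char_points:
  fixes x :: "(real^'n::finite) set \<Rightarrow> int \<times> 'g::lattice_ab_group_add"
  assumes "observable k x"
  shows "finite (char_points x i)"
proof (rule finite_subset)
  show "char_points x i \<subseteq> {p. \<forall>j. p $ j \<in> (\<lambda>s. char_proj x i s $ j) ` Tset x i}"
    unfolding char_points_def by blast
  show "finite {p. \<forall>j. p $ j \<in> (\<lambda>s. char_proj x i s $ j) ` Tset x i}"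
    using finite_char_proj_values[OF assms] by (rule finite_componentwise_vectors)
qed

theorem lemma4p1:
  fixes k :: int and i :: int
    and x :: "(real^'n::finite) set \<Rightarrow> int \<times> 'g::lattice_ab_group_add"
  assumes "k \<ge> 1"
    and "dedekind_sigma_complete TYPE('g)"
    and "observable k x"
    and "i \<in> {1..k}" and "Tset x i \<noteq> {}"
    and "\<forall>j\<in>{1..<i}. Tset x j = {}"
  shows "finite (char_points x i)"
  using finite_char_points[OF \<open>observable k x\<close>] .

end
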